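(* Let $G=(U,V,E)$ be a path-restricted ordered bipartite graph, let $P$ be a forward path in $G$, and let $w$ be a vertex of $G$ not on $P$. Then at most one edge of $G$ joins $w$ to a vertex of $P$.
   Context: An ordered bipartite graph is $G=(U,V,E)$ where $U,V$ are disjoint finite sets, each carrying a strict total order (both written $<$), and $E\subseteq U\times V$. A path is a sequence of edges in which consecutive edges share a vertex. A path visiting the vertices of $U$ in the order $u_1,\dots,u_k$ and those of $V$ in the order $v_1,\dots,v_l$ is a forward path if either $u_1<\dots<u_k$ and $v_1<\dots<v_l$, or $u_1>\dots>u_k$ and $v_1>\dots>v_l$. For $x\le y$ in $U$ write $\langle x,y\rangle=\{u\in U: x\le u\le y\}$, and similarly in $V$. If $u_a<u_b$ are the smallest and largest $U$-vertices and $v_c<v_d$ the smallest and largest $V$-vertices of a forward path $P$, the range of $P$ is $\{\langle u_a,u_b\rangle,\langle v_c,v_d\rangle\}$. A vertex of $P$ is non-terminal if it is adjacent along $P$ to two vertices of $P$. An edge is a back edge to $P$ if either it is $(u_a,v_j)$ with $v_j\in\langle v_c,v_d\rangle$ and $v_j>v'$ for some non-terminal vertex $v'\in V$ of $P$, or it is $(u_i,v_c)$ with $u_i\in\langle u_a,u_b\rangle$ and $u_i>u'$ for some non-terminal vertex $u'\in U$ of $P$. $G$ is a path-restricted ordered bipartite graph (PRBG) if no forward path in $G$ has a back edge in $E$. *)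

theory Defs
  imports Main
begin

text \<open>Vertices of G are represented in the sum type 'u + 'v
(Inl u for u in U, Inr v for v in V), which makes U and V disjoint.\<close>

definition obg :: "'u set \<Rightarrow> 'v set \<Rightarrow> ('u \<times> 'v) set \<Rightarrow> bool" where
  "obg U V E \<longleftrightarrow> finite U \<and> finite V \<and> E \<subseteq> U \<times> V"

definition adj :: "('u \<times> 'v) set \<Rightarrow> 'u + 'v \<Rightarrow> 'u + 'v \<Rightarrow> bool" where
  "adj E x y \<longleftrightarrow> (\<exists>u v. (x = Inl u \<and> y = Inr v \<or> x = Inr v \<and> y = Inl u) \<and> (u, v) \<in> E)"

text \<open>A path (a nonempty sequence of edges, consecutive edges sharing a vertex)
is represented by the list of its vertices in the order visited; it has at
least one edge, its vertices are distinct, and consecutive vertices are joined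
by an edge of E.\<close>

definition is_path :: "'u set \<Rightarrow> 'v set \<Rightarrow> ('u \<times> 'v) set \<Rightarrow> ('u + 'v) list \<Rightarrow> bool" where
  "is_path U V E P \<longleftrightarrow> length P \<ge> 2 \<and> distinct P \<and> set P \<subseteq> Inl ` U \<union> Inr ` V
     \<and> (\<forall>i. Suc i < length P \<longrightarrow> adj E (P ! i) (P ! Suc i))"

definition Uverts :: "('u + 'v) list \<Rightarrow> 'u list" where
  "Uverts P = concat (map (\<lambda>x. case x of Inl u \<Rightarrow> [u] | Inr _ \<Rightarrow> []) P)"

definition Vverts :: "('u + 'v) list \<Rightarrow> 'v list" where
  "Vverts P = concat (map (\<lambda>x. case x of Inl _ \<Rightarrow> [] | Inr v \<Rightarrow> [v]) P)"

definition forward_path :: "'u::linorder set \<Rightarrow> 'v::linorder set \<Rightarrow> ('u \<times> 'v) set \<Rightarrow> ('u + 'v) list \<Rightarrow> bool" where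
  "forward_path U V E P \<longleftrightarrow> is_path U V E P \<and>
     ((sorted_wrt (<) (Uverts P) \<and> sorted_wrt (<) (Vverts P)) \<or>
      (sorted_wrt (>) (Uverts P) \<and> sorted_wrt (>) (Vverts P)))"

text \<open>A vertex of P is non-terminal if it is adjacent along P to two vertices of P,
i.e. it occurs at an interior position of the vertex list.\<close>

definition non_terminal :: "('u + 'v) list \<Rightarrow> 'u + 'v \<Rightarrow> bool" where
  "non_terminal P x \<longleftrightarrow> (\<exists>i. 0 < i \<and> Suc i < length P \<and> P ! i = x)"

definition back_edge :: "'u::linorder set \<Rightarrow> 'v::linorder set \<Rightarrow> ('u + 'v) list \<Rightarrow> 'u \<times> 'v \<Rightarrow> bool" where
  "back_edge U V P e \<longleftrightarrow>
     (let ua = Min (set (Uverts P)); ub = Max (set (Uverts P));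
          vc = Min (set (Vverts P)); vd = Max (set (Vverts P)) in
      (fst e = ua \<and> snd e \<in> {v \<in> V. vc \<le> v \<and> v \<le> vd} \<and>
         (\<exists>v'. non_terminal P (Inr v') \<and> v' < snd e)) \<or>
      (snd e = vc \<and> fst e \<in> {u \<in> U. ua \<le> u \<and> u \<le> ub} \<and>
         (\<exists>u'. non_terminal P (Inl u') \<and> u' < fst e)))"

definition PRBG :: "'u::linorder set \<Rightarrow> 'v::linorder set \<Rightarrow> ('u \<times> 'v) set \<Rightarrow> bool" where
  "PRBG U V E \<longleftrightarrow> obg U V E \<and>
     (\<forall>P. forward_path U V E P \<longrightarrow> \<not> (\<exists>e \<in> E. back_edge U V P e))"

end

theory Submission
  imports Defs
begin

text \<open>If w had two neighbours on P, the subpath between them would be a forward path with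
both ends adjacent to w. Reversing it and exchanging the roles of U and V if necessary, it is
increasing, runs from c to d in V with c < d, and w = u lies in U. Let y be the second vertex of
the subpath. If u < y, prepending u gives a forward path whose least U-vertex is u, and (u, d) is
a back edge to it because the non-terminal vertex c is below d. If y < u, then (u, c) is a back
edge because the non-terminal vertex y is below u: to the subpath itself if some U-vertex of it
exceeds u, and otherwise to the subpath extended by u.\<close>

lemma Uverts_simps [simp]:
  "Uverts [] = []" "Uverts (Inl u # P) = u # Uverts P" "Uverts (Inr v # P) = Uverts P"
  "Uverts (P @ Q) = Uverts P @ Uverts Q"
  by (simp_all add: Uverts_def)

lemma Vverts_simps [simp]:
  "Vverts [] = []" "Vverts (Inl u # P) = Vverts P" "Vverts (Inr v # P) = v # Vverts P"
  "Vverts (P @ Q) = Vverts P @ Vverts Q"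
  by (simp_all add: Vverts_def)

lemma set_Uverts: "set (Uverts P) = {u. Inl u \<in> set P}"
  by (induction P) (auto split: sum.splits simp: Uverts_def)

lemma set_Vverts: "set (Vverts P) = {v. Inr v \<in> set P}"
  by (induction P) (auto split: sum.splits simp: Vverts_def)

lemma Uverts_rev: "Uverts (rev P) = rev (Uverts P)"
  by (induction P) (auto split: sum.splits simp: Uverts_def)

lemma Vverts_rev: "Vverts (rev P) = rev (Vverts P)"
  by (induction P) (auto split: sum.splits simp: Vverts_def)

lemma adj_simps [simp]:
  "adj E (Inl u) (Inr v) \<longleftrightarrow> (u, v) \<in> E" "adj E (Inr v) (Inl u) \<longleftrightarrow> (u, v) \<in> E"
  "\<not> adj E (Inl u) (Inl u')" "\<not> adj E (Inr v) (Inr v')"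
  by (auto simp: adj_def)

lemma adj_commute: "adj E x y \<longleftrightarrow> adj E y x"
  by (auto simp: adj_def)

lemma is_path_iff:
  "is_path U V E P \<longleftrightarrow>
     2 \<le> length P \<and> distinct P \<and> set P \<subseteq> Inl ` U \<union> Inr ` V \<and> successively (adj E) P"
  by (simp add: is_path_def successively_conv_nth)

lemma successively_adj_rev: "successively (adj E) (rev P) \<longleftrightarrow> successively (adj E) P"
  using adj_commute[of E] by (simp cong: successively_cong)

lemma forward_path_rev: "forward_path U V E P \<Longrightarrow> forward_path U V E (rev P)"
  by (auto simp: forward_path_def is_path_iff successively_adj_rev Uverts_rev Vverts_rev sorted_wrt_rev
      simp del: successively_rev)

lemma forward_path_infix:
  "forward_path U V E (xs @ S @ ys) \<Longrightarrow> 2 \<le> length S \<Longrightarrow> forward_path U V E S"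
  by (auto simp: forward_path_def is_path_iff successively_append_iff sorted_wrt_append)

lemma non_terminal_second: "non_terminal (a # x # b # zs) x"
  unfolding non_terminal_def by (rule exI[of _ 1]) simp

lemma non_terminal_in_set: "non_terminal P x \<Longrightarrow> x \<in> set P"
  by (auto simp: non_terminal_def)

lemma back_edge_from_Min_Uverts:
  assumes "Min (set (Uverts R)) = u" "Inr v \<in> set R" "v \<in> V"
    and "non_terminal R (Inr v')" "v' < v"
  shows "back_edge U V R (u, v)"
proof -
  have "v \<in> set (Vverts R)"
    using assms(2) by (simp add: set_Vverts)
  with assms show ?thesis
    by (auto simp: back_edge_def Let_def intro: Min_le Max_ge)
qed

lemma back_edge_to_Min_Vverts:
  assumes "Min (set (Vverts R)) = v" "u \<in> U" "u \<le> Max (set (Uverts R))"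
    and "non_terminal R (Inl u')" "u' < u"
  shows "back_edge U V R (u, v)"
proof -
  have "u' \<in> set (Uverts R)"
    using non_terminal_in_set[OF assms(4)] by (simp add: set_Uverts)
  then have "Min (set (Uverts R)) \<le> u'"
    by (intro Min_le) auto
  with assms show ?thesis
    by (auto simp: back_edge_def Let_def)
qed

lemma Min_set_sorted_wrt_less:
  fixes x :: "'a::linorder"
  shows "sorted_wrt (<) (x # xs) \<Longrightarrow> Min (set (x # xs)) = x"
  by (auto intro: Min_insert2 less_imp_le)

definition swap_side :: "'a + 'b \<Rightarrow> 'b + 'a" where
  "swap_side = case_sum Inr Inl"

lemma swap_side_simps [simp]:
  "swap_side (Inl a) = Inr a" "swap_side (Inr b) = Inl b" "swap_side (swap_side x) = x"
  by (simp_all add: swap_side_def split: sum.splits)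

lemma inj_swap_side: "inj swap_side"
  by (metis injI swap_side_simps(3))

lemma Uverts_map_swap_side [simp]: "Uverts (map swap_side P) = Vverts P"
  by (induction P) (auto simp: Uverts_def Vverts_def swap_side_def split: sum.splits)

lemma Vverts_map_swap_side [simp]: "Vverts (map swap_side P) = Uverts P"
  by (induction P) (auto simp: Uverts_def Vverts_def swap_side_def split: sum.splits)

lemma adj_swap [simp]: "adj (prod.swap ` E) (swap_side x) (swap_side y) \<longleftrightarrow> adj E x y"
  by (cases x; cases y) auto

lemma is_path_swap: "is_path V U (prod.swap ` E) (map swap_side P) \<longleftrightarrow> is_path U V E P"
proof -
  have "set P \<subseteq> Inl ` U \<union> Inr ` V \<longleftrightarrow> swap_side ` set P \<subseteq> Inl ` V \<union> Inr ` U"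
    by (auto simp: swap_side_def split: sum.splits)
  then show ?thesis
    by (simp add: is_path_iff successively_map distinct_map inj_on_subset[OF inj_swap_side])
qed

lemma forward_path_swap:
  "forward_path V U (prod.swap ` E) (map swap_side P) \<longleftrightarrow> forward_path U V E P"
  by (auto simp: forward_path_def is_path_swap)

lemma non_terminal_swap: "non_terminal (map swap_side P) (swap_side x) \<longleftrightarrow> non_terminal P x"
  by (auto simp: non_terminal_def inj_eq[OF inj_swap_side])

lemma back_edge_swap: "back_edge V U (map swap_side P) (prod.swap e) \<longleftrightarrow> back_edge U V P e"
  using non_terminal_swap[of P "Inl _"] non_terminal_swap[of P "Inr _"]
  by (cases e) (auto simp: back_edge_def Let_def)

lemma PRBG_swap:
  assumes "PRBG U V E"
  shows "PRBG V U (prod.swap ` E)"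
  unfolding PRBG_def
proof (intro conjI allI impI notI)
  show "obg V U (prod.swap ` E)"
    using assms by (auto simp: PRBG_def obg_def)
next
  fix Q assume Q: "forward_path V U (prod.swap ` E) Q" "\<exists>e \<in> prod.swap ` E. back_edge V U Q e"
  have Q_eq: "Q = map swap_side (map swap_side Q)"
    by (simp add: map_idI)
  then obtain e where "e \<in> E" "back_edge U V (map swap_side Q) e"
    using Q(2) back_edge_swap by fastforce
  moreover have "forward_path U V E (map swap_side Q)"
    using Q(1) Q_eq forward_path_swap by metis
  ultimately show False
    using assms by (auto simp: PRBG_def)
qed

lemma is_path_between_Inr_cases:
  assumes "is_path U V E S" "hd S = Inr c" "last S = Inr d"
  obtains y b S' where "S = Inr c # Inl y # b # S'" "Inr d \<in> set (b # S')"
proof -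
  obtain x T where S_eq: "S = Inr c # x # T"
    using assms(1,2) by (cases S rule: remdups_adj.cases) (auto simp: is_path_iff)
  moreover obtain y where "x = Inl y"
    using assms(1) S_eq by (cases x) (auto simp: is_path_iff)
  moreover have "T \<noteq> []"
    using assms(3) S_eq \<open>x = Inl y\<close> by auto
  ultimately show thesis
    using that assms(3) by (metis last_ConsR last_in_set list.exhaust list.distinct(1))
qed

lemma PRBG_increasing_path_ends_no_common_Inl_neighbour:
  fixes u :: "'u::linorder" and c d :: "'v::linorder"
  assumes prbg: "PRBG U V E" and S: "is_path U V E S"
    and incU: "sorted_wrt (<) (Uverts S)" and incV: "sorted_wrt (<) (Vverts S)"
    and ends: "hd S = Inr c" "last S = Inr d"
    and u: "u \<in> U" "Inl u \<notin> set S" and edges: "(u, c) \<in> E" "(u, d) \<in> E"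
  shows False
proof -
  have no_back: "\<not> back_edge U V R e" if "forward_path U V E R" "e \<in> E" for R e
    using prbg that by (auto simp: PRBG_def)
  have len: "2 \<le> length S" and dist: "distinct S" and verts: "set S \<subseteq> Inl ` U \<union> Inr ` V"
    and steps: "successively (adj E) S"
    using S by (auto simp: is_path_iff)
  obtain y b S' where S_eq: "S = Inr c # Inl y # b # S'" and d_in: "Inr d \<in> set (b # S')"
    using is_path_between_Inr_cases[OF S ends] .
  have "y \<noteq> u"
    using u(2) S_eq by auto
  have "c < d"
    using d_in incV S_eq by (auto simp: set_Vverts)
  have min_V: "Min (set (Vverts (S @ zs))) = c" if "Vverts zs = []" for zs
  proof -
    have "Vverts (S @ zs) = Vverts S"
      using that by simp
    also have "\<dots> = c # Vverts (Inl y # b # S')"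
      using S_eq by simp
    finally show ?thesis
      using incV S_eq Min_set_sorted_wrt_less by fastforce
  qed
  have y_nt: "non_terminal (S @ zs) (Inl y)" for zs
    using S_eq non_terminal_second by (metis append_Cons)
  consider (below) "u < y" | (inside) "y < u" "\<exists>x. Inl x \<in> set S \<and> u < x"
    | (above) "\<forall>x. Inl x \<in> set S \<longrightarrow> x < u"
    using \<open>y \<noteq> u\<close> u(2) S_eq by (metis linorder_neqE)
  then show False
  proof cases
    case below
    define R where "R = Inl u # S"
    have incR: "sorted_wrt (<) (u # Uverts S)"
      using incU below S_eq by (auto simp: set_Uverts)
    have "forward_path U V E R"
      using S incR incV u edges(1) S_eq by (auto simp: R_def forward_path_def is_path_iff)
    moreover have "back_edge U V R (u, d)"
    proof (rule back_edge_from_Min_Uverts)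
      show "Min (set (Uverts R)) = u"
        using Min_set_sorted_wrt_less[OF incR] by (simp add: R_def)
      show "Inr d \<in> set R" "d \<in> V"
        using d_in verts S_eq by (auto simp: R_def)
      show "non_terminal R (Inr c)"
        using S_eq non_terminal_second by (simp add: R_def)
    qed (fact \<open>c < d\<close>)
    ultimately show False
      using no_back edges(2) by blast
  next
    case inside
    then obtain x where "x \<in> set (Uverts S)" "u < x"
      by (auto simp: set_Uverts)
    then have "u \<le> Max (set (Uverts S))"
      by (meson List.finite_set Max_ge less_imp_le order.trans)
    then have "back_edge U V S (u, c)"
      using back_edge_to_Min_Vverts[OF min_V[of "[]"] u(1) _ y_nt[of "[]"] inside(1)] by simp
    moreover have "forward_path U V E S"
      using S incU incV by (simp add: forward_path_def)
    ultimately show False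
      using no_back edges(1) by blast
  next
    case above
    then have "y < u"
      using S_eq by simp
    define R where "R = S @ [Inl u]"
    have "successively (adj E) R"
      using steps ends(2) edges(2) by (simp add: R_def successively_append_iff)
    then have "forward_path U V E R"
      using len dist verts incU incV above u
      by (auto simp: R_def forward_path_def is_path_iff sorted_wrt_append set_Uverts)
    moreover have "back_edge U V R (u, c)"
      using back_edge_to_Min_Vverts[OF min_V u(1) _ y_nt \<open>y < u\<close>, of "[Inl u]"]
      by (simp add: R_def)
    ultimately show False
      using no_back edges(1) by blast
  qed
qed

lemma PRBG_increasing_path_ends_no_common_neighbour:
  assumes prbg: "PRBG U V E" and S: "is_path U V E S"
    and incU: "sorted_wrt (<) (Uverts S)" and incV: "sorted_wrt (<) (Vverts S)"
    and w: "w \<in> Inl ` U \<union> Inr ` V" "w \<notin> set S"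
    and adj_ends: "adj E w (hd S)" "adj E w (last S)"
  shows False
proof (cases w)
  case (Inl u)
  then obtain c d where "hd S = Inr c" "last S = Inr d" "(u, c) \<in> E" "(u, d) \<in> E"
    using adj_ends by (auto simp: adj_def)
  with Inl w show False
    using PRBG_increasing_path_ends_no_common_Inl_neighbour[OF prbg S incU incV] by blast
next
  case (Inr v)
  then obtain c d where "hd S = Inl c" "last S = Inl d" "(c, v) \<in> E" "(d, v) \<in> E"
    using adj_ends by (auto simp: adj_def)
  moreover have "S \<noteq> []"
    using S by (auto simp: is_path_iff)
  moreover have "Inl v \<notin> set (map swap_side S)"
    using w(2) Inr by (metis list.set_map image_iff swap_side_simps(2,3))
  ultimately show False
    using PRBG_increasing_path_ends_no_common_Inl_neighbour[OF PRBG_swap[OF prbg]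
        iffD2[OF is_path_swap S], of c d v] incU incV w Inr
    by (auto simp: hd_map last_map)
qed

lemma PRBG_forward_path_ends_no_common_neighbour:
  assumes prbg: "PRBG U V E" and S: "forward_path U V E S"
    and w: "w \<in> Inl ` U \<union> Inr ` V" "w \<notin> set S"
    and adj_ends: "adj E w (hd S)" "adj E w (last S)"
  shows False
proof -
  have "S \<noteq> []"
    using S by (auto simp: forward_path_def is_path_iff)
  then have rev_ends: "adj E w (hd (rev S))" "adj E w (last (rev S))"
    using adj_ends by (simp_all add: hd_rev last_rev)
  from S consider
    "is_path U V E S" "sorted_wrt (<) (Uverts S)" "sorted_wrt (<) (Vverts S)" |
    "is_path U V E (rev S)" "sorted_wrt (<) (Uverts (rev S))" "sorted_wrt (<) (Vverts (rev S))"
    using forward_path_rev[OF S]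
    by (auto simp: forward_path_def Uverts_rev Vverts_rev sorted_wrt_rev)
  then show False
  proof cases
    case 1
    then show False
      using PRBG_increasing_path_ends_no_common_neighbour[OF prbg _ _ _ w adj_ends] by blast
  next
    case 2
    moreover have "w \<notin> set (rev S)"
      using w(2) by simp
    ultimately show False
      using PRBG_increasing_path_ends_no_common_neighbour[OF prbg _ _ _ w(1) _ rev_ends] by blast
  qed
qed

lemma PRBG_forward_path_no_two_neighbours:
  assumes prbg: "PRBG U V E" and P: "forward_path U V E P"
    and w: "w \<in> Inl ` U \<union> Inr ` V" "w \<notin> set P"
    and ij: "i < j" "j < length P" and adj: "adj E w (P ! i)" "adj E w (P ! j)"
  shows False
proof -
  define S where "S = drop i (take (Suc j) P)"
  have "take i (take (Suc j) P) = take i P"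
    using ij by (simp add: min_def)
  then have "take (Suc j) P = take i P @ S"
    unfolding S_def by (metis append_take_drop_id)
  then have "P = take i P @ S @ drop (Suc j) P"
    by (metis append_assoc append_take_drop_id)
  then have S_path: "forward_path U V E S"
    using P ij forward_path_infix[of U V E "take i P" S "drop (Suc j) P"] by (simp add: S_def)
  have ends: "hd S = P ! i" "last S = P ! j"
    using ij by (simp_all add: S_def hd_drop_conv_nth last_conv_nth)
  have "w \<notin> set S"
    using w(2) by (auto simp: S_def dest: in_set_dropD in_set_takeD)
  then show False
    using PRBG_forward_path_ends_no_common_neighbour[OF prbg S_path w(1)] adj ends by simp
qed

theorem corollary1:
  fixes U :: "'u::linorder set" and V :: "'v::linorder set" and E :: "('u \<times> 'v) set"
    and P :: "('u + 'v) list" and w :: "'u + 'v"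
  assumes "PRBG U V E"
    and "forward_path U V E P"
    and "w \<in> Inl ` U \<union> Inr ` V"
    and "w \<notin> set P"
  shows "card {x \<in> set P. adj E w x} \<le> 1"
proof -
  have "a = b" if a: "a \<in> set P" "adj E w a" and b: "b \<in> set P" "adj E w b" for a b
  proof -
    obtain i where i: "i < length P" "P ! i = a"
      using a(1) by (auto simp: in_set_conv_nth)
    obtain j where j: "j < length P" "P ! j = b"
      using b(1) by (auto simp: in_set_conv_nth)
    have False if "i < j"
      using PRBG_forward_path_no_two_neighbours[OF assms that j(1)] i j a b by simp
    moreover have False if "j < i"
      using PRBG_forward_path_no_two_neighbours[OF assms that i(1)] i j a b by simp
    ultimately show "a = b"
      using i j by (metis linorder_neqE_nat)
  qed
  then show ?thesis
    by (auto simp: card_le_Suc0_iff_eq One_nat_def)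
qed

end
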